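(* Let $Y(0),Y(1)$ be integrable real-valued potential outcomes and $X$ a random vector in $\mathbb{R}^{d_X}$, $d_X\geq 3$, with support $\mathcal{X}$, written (after reordering coordinates) as $X=(X^{(1)},X^{(2)})$ where $X^{(1)}$ consists of exactly two components and $X^{(2)}$ of the remaining ones; for $x\in\mathcal{X}$ write $x=(x^{(1)},x^{(2)})$ correspondingly. Suppose: (Deterministic treatment) $\mathcal{X}=\mathcal{X}_0\cup\mathcal{X}_1$ with $\mathcal{X}_0\cap\mathcal{X}_1=\emptyset$, $D=1\{X\in\mathcal{X}_1\}$ and $Y=DY(1)+(1-D)Y(0)$; (Continuity) $x\mapsto E[Y(0)|X=x]$ and $x\mapsto E[Y(1)|X=x]$ are continuous on $\mathcal{X}$; (Conditional comonotonicity) for all $x_1,x_2\in\mathcal{X}$ with $x_1^{(2)}=x_2^{(2)}$, $$E[Y(1)|X=x_1]\geq E[Y(1)|X=x_2]\iff E[Y(0)|X=x_1]\geq E[Y(0)|X=x_2].$$ Let $\mathcal{F}=\mathrm{cl}(\mathrm{int}(\mathcal{X}_1))\cap\mathrm{cl}(\mathrm{int}(\mathcal{X}_0))$ and for $d\in\{0,1\}$ let $g_d$ be a function on $\mathcal{X}_d\cup\mathcal{F}$ with $g_d(x)=E[Y|X=x]$ for $x\in\mathcal{X}_d$ and $g_d$ continuous at each point of $\mathcal{F}$. Then: (i) if $d\in\{0,1\}$, $x\in\mathcal{X}_d$ and there exists $x^*\in\mathcal{F}$ with $x^{*(2)}=x^{(2)}$ and $E[Y|X=x]=g_d(x^* )$,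 then $E[Y(1)|X=x]=g_1(x^* )$ and $E[Y(0)|X=x]=g_0(x^* )$; (ii) for any $x_1,x_2\in\mathcal{F}$ with $x_1^{(2)}=x_2^{(2)}$, $g_0(x_1)\geq g_0(x_2)\iff g_1(x_1)\geq g_1(x_2)$.
   Context: Conditional expectation functions $x\mapsto E[Y(d)|X=x]$ are understood as the unique continuous versions. For $x\in\mathcal{X}_d$, $E[Y|X=x]$ is understood as $E[Y(d)|X=x]$. $\mathrm{int}$ and $\mathrm{cl}$ denote interior and closure in $\mathbb{R}^{d_X}$. *)

theory Defs
  imports "HOL-Probability.Probability"
begin

text \<open>Support of the distribution of a random vector X: the set of points every
open ball around which has positive probability (the smallest closed set of full measure).\<close>
definition rv_support :: "'a measure \<Rightarrow> ('a \<Rightarrow> 'b::metric_space) \<Rightarrow> 'b set" where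
  "rv_support M X = {x. \<forall>e>0. measure M {\<omega>\<in>space M. X \<omega> \<in> ball x e} > 0}"

text \<open>m is a version of the regression function x |-> E[Y | X = x], i.e. m(X) is a
version of the conditional expectation of Y given sigma(X).\<close>
definition cond_mean_fun ::
  "'a measure \<Rightarrow> ('a \<Rightarrow> 'b::topological_space) \<Rightarrow> ('a \<Rightarrow> real) \<Rightarrow> ('b \<Rightarrow> real) \<Rightarrow> bool" where
  "cond_mean_fun M X Y m \<longleftrightarrow>
     m \<in> borel_measurable borel \<and> integrable M (\<lambda>\<omega>. m (X \<omega>)) \<and>
     (\<forall>A\<in>sets borel. (LINT \<omega>:(X -` A \<inter> space M)|M. Y \<omega>) = (LINT \<omega>:(X -` A \<inter> space M)|M. m (X \<omega>)))"

end

theory Submission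
  imports Defs
begin

text \<open>The support is closed, so the boundary set \<open>F\<close>, which lies in the closures of both
  \<open>X0\<close> and \<open>X1\<close>, is contained in it; hence each continuous extension \<open>g_d\<close> agrees on
  \<open>F\<close> with the continuous regression function \<open>m_d\<close>. Comonotonicity along a fibre
  \<open>snd x = const\<close> preserves ties in both directions, so \<open>m_d x = m_d x*\<close> for one \<open>d\<close>
  forces it for the other, and it transfers directly to \<open>g0, g1\<close> on \<open>F\<close>.\<close>

lemma rv_support_closed:
  fixes X :: "'a \<Rightarrow> 'b::metric_space"
  assumes "prob_space M" "X \<in> borel_measurable M"
  shows "closed (rv_support M X)"
proof -
  interpret prob_space M by fact
  have measure_ball_mono:
    "measure M {\<omega>\<in>space M. X \<omega> \<in> ball y d} \<le> measure M {\<omega>\<in>space M. X \<omega> \<in> ball x e}"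
    if "ball y d \<subseteq> ball x e" for x y d e
    using that measurable_sets[OF assms(2) borel_open[OF open_ball]]
    by (intro finite_measure_mono) (auto simp: vimage_def Int_def conj_commute)
  have "open (- rv_support M X)"
  proof (rule openI)
    fix x assume "x \<in> - rv_support M X"
    then obtain e where "e > 0" and null: "measure M {\<omega>\<in>space M. X \<omega> \<in> ball x e} \<le> 0"
      by (auto simp: rv_support_def not_less)
    have "y \<notin> rv_support M X" if "y \<in> ball x e" for y
    proof -
      have "ball y (e - dist x y) \<subseteq> ball x e"
      proof
        fix z assume "z \<in> ball y (e - dist x y)"
        moreover have "dist x z \<le> dist x y + dist y z"
          by (rule dist_triangle)
        ultimately show "z \<in> ball x e"
          by simp
      qed
      then have "measure M {\<omega>\<in>space M. X \<omega> \<in> ball y (e - dist x y)} \<le> 0"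
        by (rule order_trans[OF measure_ball_mono null])
      moreover have "e - dist x y > 0"
        using that by simp
      ultimately show ?thesis
        by (auto simp: rv_support_def not_less intro!: exI[of _ "e - dist x y"])
    qed
    with \<open>e > 0\<close> show "\<exists>e>0. ball x e \<subseteq> - rv_support M X"
      by blast
  qed
  then show ?thesis
    by (simp add: closed_open)
qed

lemma continuous_within_closure_agree:
  fixes f g :: "'a::t2_space \<Rightarrow> 'b::t2_space"
  assumes "x \<in> closure A"
    and "continuous (at x within A) f" "continuous (at x within A) g"
    and "\<And>y. y \<in> A \<Longrightarrow> f y = g y"
  shows "f x = g x"
proof (cases "x \<in> A")
  case True
  then show ?thesis using assms(4) by simp
next
  case False
  then have "at x within A \<noteq> bot"
    using assms(1) by (simp add: trivial_limit_within closure_def)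
  moreover have "(f \<longlongrightarrow> f x) (at x within A)"
    using assms(2) by (simp add: continuous_within)
  moreover have "(f \<longlongrightarrow> g x) (at x within A)"
  proof (rule tendsto_cong[THEN iffD2])
    show "\<forall>\<^sub>F y in at x within A. f y = g y"
      using assms(4) by (simp add: eventually_at_filter)
    show "(g \<longlongrightarrow> g x) (at x within A)"
      using assms(3) by (simp add: continuous_within)
  qed
  ultimately show ?thesis
    by (rule tendsto_unique)
qed

lemma continuous_extension_eq_at_closure_point:
  fixes g m :: "'a::t2_space \<Rightarrow> 'b::t2_space"
  assumes "x \<in> closure A" "closure A \<subseteq> S" "continuous_on S m"
    and "A \<subseteq> T" "continuous (at x within T) g"
    and "\<And>y. y \<in> A \<Longrightarrow> g y = m y"
  shows "g x = m x"
proof (rule continuous_within_closure_agree[OF assms(1) _ _ assms(6)])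
  show "continuous (at x within A) g"
    using assms(5,4) by (rule continuous_within_subset)
  show "continuous (at x within A) m"
    using assms(3,2,1) closure_subset
    by (intro continuous_on_imp_continuous_within[of S]) auto
qed

lemma comonotone_eq_iff:
  fixes a b :: "'a::linorder" and c d :: "'b::linorder"
  assumes "b \<le> a \<longleftrightarrow> d \<le> c" and "a \<le> b \<longleftrightarrow> c \<le> d"
  shows "a = b \<longleftrightarrow> c = d"
  using assms by (metis order.antisym order.refl)

theorem theorem3:
  fixes M :: "'a measure"
    and X :: "'a \<Rightarrow> (real^2) \<times> (real^'m)"
    and Y0 Y1 Y :: "'a \<Rightarrow> real"
    and D :: "'a \<Rightarrow> real"
    and Xs X0 X1 :: "((real^2) \<times> (real^'m)) set"
    and m0 m1 g0 g1 :: "(real^2) \<times> (real^'m) \<Rightarrow> real"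
    and F :: "((real^2) \<times> (real^'m)) set"
  assumes prob: "prob_space M"
    and X_rv: "X \<in> borel_measurable M"
    and int0: "integrable M Y0" and int1: "integrable M Y1"
    and supp: "Xs = rv_support M X"
    and partition: "Xs = X0 \<union> X1" "X0 \<inter> X1 = {}"
    and D_def: "\<And>\<omega>. D \<omega> = (if X \<omega> \<in> X1 then 1 else 0)"
    and Y_def: "\<And>\<omega>. Y \<omega> = D \<omega> * Y1 \<omega> + (1 - D \<omega>) * Y0 \<omega>"
    and cm0: "cond_mean_fun M X Y0 m0" and cm1: "cond_mean_fun M X Y1 m1"
    and cont0: "continuous_on Xs m0" and cont1: "continuous_on Xs m1"
    and comono: "\<And>x1 x2. x1 \<in> Xs \<Longrightarrow> x2 \<in> Xs \<Longrightarrow> snd x1 = snd x2 \<Longrightarrow>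
                   (m1 x1 \<ge> m1 x2 \<longleftrightarrow> m0 x1 \<ge> m0 x2)"
    and F_def: "F = closure (interior X1) \<inter> closure (interior X0)"
    and g0_eq: "\<And>x. x \<in> X0 \<Longrightarrow> g0 x = m0 x"
    and g1_eq: "\<And>x. x \<in> X1 \<Longrightarrow> g1 x = m1 x"
    and g0_cont: "\<And>x. x \<in> F \<Longrightarrow> continuous (at x within (X0 \<union> F)) g0"
    and g1_cont: "\<And>x. x \<in> F \<Longrightarrow> continuous (at x within (X1 \<union> F)) g1"
  shows "(\<forall>x xs. x \<in> X0 \<longrightarrow> xs \<in> F \<longrightarrow> snd xs = snd x \<longrightarrow> m0 x = g0 xs \<longrightarrow>
             m1 x = g1 xs \<and> m0 x = g0 xs)
       \<and> (\<forall>x xs. x \<in> X1 \<longrightarrow> xs \<in> F \<longrightarrow> snd xs = snd x \<longrightarrow> m1 x = g1 xs \<longrightarrow>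
             m1 x = g1 xs \<and> m0 x = g0 xs)
       \<and> (\<forall>x1 x2. x1 \<in> F \<longrightarrow> x2 \<in> F \<longrightarrow> snd x1 = snd x2 \<longrightarrow>
             (g0 x1 \<ge> g0 x2 \<longleftrightarrow> g1 x1 \<ge> g1 x2))"
proof -
  have "closed Xs"
    using rv_support_closed[OF prob X_rv] supp by simp
  then have closure_sub: "closure X0 \<subseteq> Xs" "closure X1 \<subseteq> Xs"
    using partition(1) by (simp_all add: closure_minimal)
  have F_sub: "F \<subseteq> closure X0" "F \<subseteq> closure X1"
    unfolding F_def using closure_mono[OF interior_subset] by blast+
  have g0_F: "g0 x = m0 x" if "x \<in> F" for x
    using that F_sub closure_sub cont0 g0_eq g0_cont[OF that]
    by (intro continuous_extension_eq_at_closure_point[of x X0 Xs m0 "X0 \<union> F" g0]) auto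
  have g1_F: "g1 x = m1 x" if "x \<in> F" for x
    using that F_sub closure_sub cont1 g1_eq g1_cont[OF that]
    by (intro continuous_extension_eq_at_closure_point[of x X1 Xs m1 "X1 \<union> F" g1]) auto
  have ties: "m1 x = m1 x' \<longleftrightarrow> m0 x = m0 x'" if "x \<in> Xs" "x' \<in> Xs" "snd x = snd x'" for x x'
    using that by (intro comonotone_eq_iff comono) auto
  have "F \<subseteq> Xs"
    using F_sub closure_sub by blast
  show ?thesis
  proof (intro conjI allI impI)
    fix x x' assume "x \<in> X0" "x' \<in> F" "snd x' = snd x" "m0 x = g0 x'"
    then show "m1 x = g1 x'"
      using ties[of x x'] \<open>F \<subseteq> Xs\<close> partition(1) g0_F g1_F by auto
  next
    fix x x' assume "x \<in> X1" "x' \<in> F" "snd x' = snd x" "m1 x = g1 x'"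
    then show "m0 x = g0 x'"
      using ties[of x x'] \<open>F \<subseteq> Xs\<close> partition(1) g0_F g1_F by auto
  next
    fix x1 x2 assume "x1 \<in> F" "x2 \<in> F" "snd x1 = snd x2"
    then show "g0 x2 \<le> g0 x1 \<longleftrightarrow> g1 x2 \<le> g1 x1"
      using comono[of x1 x2] \<open>F \<subseteq> Xs\<close> g0_F g1_F by auto
  qed
qed

end
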